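(* Let $P$ and $Q$ be irreducible transition matrices on the finite set $S$, both reversible with respect to $\pi$. Then $P$ efficiency-dominates $Q$ if and only if the matrix $Q-P$ has all eigenvalues non-negative, which holds if and only if the matrix $D(Q-P)$ has all eigenvalues non-negative, where $D=\mathrm{diag}(\pi)$.
   Context: $S$ is a finite set with $|S|=n$, identified with $\{1,\dots,n\}$, and $\pi$ is a probability distribution on $S$ with $\pi(x)>0$ for all $x$; $D=\mathrm{diag}(\pi(1),\dots,\pi(n))$. A transition matrix $P$ (nonnegative entries, rows summing to 1) acts on functions by $(Pf)(x)=\sum_y P(x,y)f(y)$. $P$ is reversible with respect to $\pi$ if $\pi(x)P(x,y)=\pi(y)P(y,x)$ for all $x,y$; irreducible if every state can be reached from every other with positive probability in some number of steps. For a Markov chain $X_1,X_2,\dots$ with transition matrix $P$ and $X_1\sim\pi$, $v(f,P)=\lim_{N\to\infty}\frac1N\mathrm{Var}\big(\sum_{i=1}^N f(X_i)\big)$. $P$ efficiency-dominates $Q$ if $v(f,P)\le v(f,Q)$ for all $f:S\to\mathbb R$. *)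

theory Defs
  imports "HOL-Analysis.Analysis"
begin

text \<open>States: a finite type 'n (identified with {1..n}). Matrices are real^'n^'n,
  with A $ x $ y the (x,y) entry.\<close>

primrec mpow :: "real^'n^'n \<Rightarrow> nat \<Rightarrow> real^'n^'n" where
  "mpow A 0 = mat 1"
| "mpow A (Suc k) = mpow A k ** A"

definition prob_dist :: "('n::finite \<Rightarrow> real) \<Rightarrow> bool" where
  "prob_dist \<pi> \<longleftrightarrow> (\<forall>x. \<pi> x > 0) \<and> (\<Sum>x\<in>UNIV. \<pi> x) = 1"

definition transition_matrix :: "real^'n::finite^'n \<Rightarrow> bool" where
  "transition_matrix P \<longleftrightarrow> (\<forall>x y. P $ x $ y \<ge> 0) \<and> (\<forall>x. (\<Sum>y\<in>UNIV. P $ x $ y) = 1)"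

definition reversible :: "real^'n::finite^'n \<Rightarrow> ('n \<Rightarrow> real) \<Rightarrow> bool" where
  "reversible P \<pi> \<longleftrightarrow> (\<forall>x y. \<pi> x * P $ x $ y = \<pi> y * P $ y $ x)"

definition irreducible_tm :: "real^'n::finite^'n \<Rightarrow> bool" where
  "irreducible_tm P \<longleftrightarrow> (\<forall>x y. \<exists>k. mpow P k $ x $ y > 0)"

text \<open>Law of the path (X_1,...,X_N) of the stationary chain, paths indexed by 0..N-1.\<close>
definition path_prob :: "real^'n::finite^'n \<Rightarrow> ('n \<Rightarrow> real) \<Rightarrow> nat \<Rightarrow> (nat \<Rightarrow> 'n) \<Rightarrow> real" where
  "path_prob P \<pi> N \<omega> = \<pi> (\<omega> 0) * (\<Prod>k<N - 1. P $ (\<omega> k) $ (\<omega> (Suc k)))"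

definition paths :: "nat \<Rightarrow> (nat \<Rightarrow> 'n::finite) set" where
  "paths N = {..<N} \<rightarrow>\<^sub>E UNIV"

definition partial_sum_var :: "('n::finite \<Rightarrow> real) \<Rightarrow> real^'n^'n \<Rightarrow> ('n \<Rightarrow> real) \<Rightarrow> nat \<Rightarrow> real" where
  "partial_sum_var f P \<pi> N =
     (\<Sum>\<omega>\<in>paths N. path_prob P \<pi> N \<omega> * (\<Sum>i<N. f (\<omega> i))^2)
     - (\<Sum>\<omega>\<in>paths N. path_prob P \<pi> N \<omega> * (\<Sum>i<N. f (\<omega> i)))^2"

definition asym_var :: "('n::finite \<Rightarrow> real) \<Rightarrow> real^'n^'n \<Rightarrow> ('n \<Rightarrow> real) \<Rightarrow> real" where
  "asym_var f P \<pi> = lim (\<lambda>N. partial_sum_var f P \<pi> N / real N)"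

definition efficiency_dominates :: "real^'n::finite^'n \<Rightarrow> real^'n^'n \<Rightarrow> ('n \<Rightarrow> real) \<Rightarrow> bool" where
  "efficiency_dominates P Q \<pi> \<longleftrightarrow> (\<forall>f. asym_var f P \<pi> \<le> asym_var f Q \<pi>)"

definition cmat :: "real^'n^'m \<Rightarrow> complex^'n^'m" where
  "cmat A = (\<chi> i j. complex_of_real (A $ i $ j))"

definition is_eigenvalue :: "real^'n::finite^'n \<Rightarrow> complex \<Rightarrow> bool" where
  "is_eigenvalue A c \<longleftrightarrow> (\<exists>v. v \<noteq> 0 \<and> cmat A *v v = c *s v)"

definition eigenvalues_nonneg :: "real^'n::finite^'n \<Rightarrow> bool" where
  "eigenvalues_nonneg A \<longleftrightarrow> (\<forall>c. is_eigenvalue A c \<longrightarrow> c \<in> \<real> \<and> Re c \<ge> 0)"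

definition diag_mat :: "('n::finite \<Rightarrow> real) \<Rightarrow> real^'n^'n" where
  "diag_mat \<pi> = (\<chi> i j. if i = j then \<pi> i else 0)"

end

theory Submission
  imports Defs
begin

text \<open>Reversibility makes \<open>P\<close> self-adjoint for \<open>\<langle>u, v\<rangle> = \<Sum>x. \<pi> x u(x) v(x)\<close>. Let \<open>g\<close> be \<open>f\<close>
  centred at its \<open>\<pi>\<close>-mean and let \<open>h\<close> solve the Poisson equation \<open>h - P h = g\<close>, which irreducibility
  makes solvable. Telescoping the correlations \<open>\<langle>g, P\<^sup>k g\<rangle>\<close> shows that the variance of the first \<open>N\<close>
  partial sums is \<open>N (2\<langle>g, h\<rangle> - \<langle>g, g\<rangle>)\<close> up to a bounded error, so \<open>v(f, P) = 2\<langle>g, h\<rangle> - \<langle>g, g\<rangle>\<close>.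
  As \<open>I - P\<close> is self-adjoint and positive semidefinite, \<open>\<langle>g, h\<rangle>\<close> is the maximum over \<open>u\<close> of
  \<open>2\<langle>g, u\<rangle> - \<langle>u, (I - P) u\<rangle>\<close>. Comparing these maxima, \<open>P\<close> dominates \<open>Q\<close> iff
  \<open>\<langle>u, P u\<rangle> \<le> \<langle>u, Q u\<rangle>\<close> for all \<open>u\<close>, i.e. iff the symmetric matrix \<open>D (Q - P)\<close> is positive
  semidefinite. Finally, if \<open>D\<close> is a positive diagonal matrix and \<open>D M\<close> is symmetric, then \<open>D M\<close> is
  positive semidefinite iff all eigenvalues of \<open>M\<close> are real and nonnegative: an eigenvector turns an
  eigenvalue into a ratio of quadratic forms, and conversely the minimum of the Rayleigh quotient
  \<open>u \<bullet> D M u / u \<bullet> D u\<close> is an eigenvalue of \<open>M\<close>.\<close>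

section \<open>Weighted inner products\<close>

definition wt_inner :: "('n::finite \<Rightarrow> real) \<Rightarrow> real^'n \<Rightarrow> real^'n \<Rightarrow> real" where
  "wt_inner w u v = (\<Sum>x\<in>UNIV. w x * u$x * v$x)"

definition wt_mean :: "('n::finite \<Rightarrow> real) \<Rightarrow> real^'n \<Rightarrow> real" where
  "wt_mean w v = (\<Sum>x\<in>UNIV. w x * v$x)"

definition centered :: "('n::finite \<Rightarrow> real) \<Rightarrow> ('n \<Rightarrow> real) \<Rightarrow> real^'n" where
  "centered w f = (\<chi> x. f x - (\<Sum>y\<in>UNIV. w y * f y))"

lemma wt_inner_commute: "wt_inner w u v = wt_inner w v u"
  unfolding wt_inner_def by (simp add: ac_simps)

lemma wt_inner_add_left: "wt_inner w (a + b) c = wt_inner w a c + wt_inner w b c"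
  unfolding wt_inner_def by (simp add: algebra_simps sum.distrib)

lemma wt_inner_add_right: "wt_inner w c (a + b) = wt_inner w c a + wt_inner w c b"
  unfolding wt_inner_def by (simp add: algebra_simps sum.distrib)

lemma wt_inner_diff_left: "wt_inner w (a - b) c = wt_inner w a c - wt_inner w b c"
  unfolding wt_inner_def by (simp add: algebra_simps sum_subtractf)

lemma wt_inner_diff_right: "wt_inner w c (a - b) = wt_inner w c a - wt_inner w c b"
  unfolding wt_inner_def by (simp add: algebra_simps sum_subtractf)

lemma wt_inner_vec_left: "wt_inner w (vec c) v = c * wt_mean w v"
  unfolding wt_inner_def wt_mean_def by (simp add: sum_distrib_left ac_simps)

lemma wt_inner_vec_right: "wt_inner w u (vec c) = c * wt_mean w u"
  unfolding wt_inner_def wt_mean_def by (simp add: sum_distrib_left ac_simps)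

lemma wt_mean_add: "wt_mean w (u + v) = wt_mean w u + wt_mean w v"
  unfolding wt_mean_def by (simp add: algebra_simps sum.distrib)

lemma wt_mean_diff: "wt_mean w (u - v) = wt_mean w u - wt_mean w v"
  unfolding wt_mean_def by (simp add: algebra_simps sum_subtractf)

lemma wt_mean_vec: "wt_mean w (vec c) = c * (\<Sum>x\<in>UNIV. w x)"
  unfolding wt_mean_def by (simp add: sum_distrib_left ac_simps)

lemma wt_mean_centered: "(\<Sum>x\<in>UNIV. w x) = 1 \<Longrightarrow> wt_mean w (centered w f) = 0"
  unfolding wt_mean_def centered_def
  by (simp add: algebra_simps sum_subtractf sum_distrib_right[symmetric])

lemma centered_of_mean_zero: "wt_mean w g = 0 \<Longrightarrow> centered w (($) g) = g"
  unfolding centered_def wt_mean_def by (simp add: vec_eq_iff)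

lemma diag_mat_mult_nth: "(diag_mat w ** A) $ x $ y = w x * A $ x $ y"
  by (simp add: diag_mat_def matrix_matrix_mult_def if_distrib if_distribR cong: if_cong)

lemma wt_inner_eq_inner_diag_mat: "wt_inner w u (A *v v) = u \<bullet> ((diag_mat w ** A) *v v)"
  by (simp add: wt_inner_def inner_vec_def matrix_vector_mult_def diag_mat_mult_nth
      sum_distrib_left ac_simps)

lemma mpow_Suc_mult_vector: "mpow A (Suc k) *v v = mpow A k *v (A *v v)"
  by (simp add: matrix_vector_mul_assoc)

lemma mpow_fixed_point: "A *v h = h \<Longrightarrow> mpow A k *v h = h"
  by (induction k) (simp_all add: matrix_vector_mul_assoc[symmetric])

section \<open>Markov chains\<close>

locale stationary_chain =
  fixes P :: "real^'n::finite^'n" and \<pi> :: "'n \<Rightarrow> real"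
  assumes prob_dist: "prob_dist \<pi>" and transition_matrix: "transition_matrix P"
    and stationary: "\<And>y. (\<Sum>x\<in>UNIV. \<pi> x * P$x$y) = \<pi> y"
begin

lemma pi_pos: "\<pi> x > 0"
  using prob_dist by (simp add: prob_dist_def)

lemma sum_pi: "(\<Sum>x\<in>UNIV. \<pi> x) = 1"
  using prob_dist by (simp add: prob_dist_def)

lemma P_nonneg: "P$x$y \<ge> 0"
  using transition_matrix by (simp add: transition_matrix_def)

lemma sum_P_row: "(\<Sum>y\<in>UNIV. P$x$y) = 1"
  using transition_matrix by (simp add: transition_matrix_def)

lemma P_vec: "P *v vec c = vec c"
  by (simp add: vec_eq_iff matrix_vector_mult_def sum_distrib_right[symmetric] sum_P_row)

lemma wt_mean_P: "wt_mean \<pi> (P *v v) = wt_mean \<pi> v"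
proof -
  have "wt_mean \<pi> (P *v v) = (\<Sum>x\<in>UNIV. \<Sum>y\<in>UNIV. \<pi> x * P$x$y * v$y)"
    by (simp add: wt_mean_def matrix_vector_mult_def sum_distrib_left mult.assoc)
  also have "\<dots> = (\<Sum>y\<in>UNIV. (\<Sum>x\<in>UNIV. \<pi> x * P$x$y) * v$y)"
    by (subst sum.swap) (simp add: sum_distrib_right)
  finally show ?thesis by (simp add: stationary wt_mean_def)
qed

lemma wt_mean_mpow: "wt_mean \<pi> (mpow P k *v v) = wt_mean \<pi> v"
  by (induction k arbitrary: v) (simp_all add: matrix_vector_mul_assoc[symmetric] wt_mean_P)

lemma mpow_nonneg: "mpow P k $x$y \<ge> 0"
proof (induction k arbitrary: x y)
  case 0 then show ?case by (simp add: mat_def)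
next
  case (Suc k) then show ?case
    by (auto simp: matrix_matrix_mult_def intro!: sum_nonneg mult_nonneg_nonneg P_nonneg)
qed

lemma sum_mpow_row: "(\<Sum>y\<in>UNIV. mpow P k $x$y) = 1"
  using mpow_fixed_point[OF P_vec, of k 1]
  by (simp add: vec_eq_iff matrix_vector_mult_def)

lemma mpow_le_1: "mpow P k $x$y \<le> 1"
proof -
  have "mpow P k $x$y \<le> (\<Sum>z\<in>UNIV. mpow P k $x$z)"
    by (rule member_le_sum) (auto simp: mpow_nonneg)
  then show ?thesis by (simp add: sum_mpow_row)
qed

lemma dirichlet_form_nonneg: "0 \<le> wt_inner \<pi> v (v - P *v v)"
proof -
  have "wt_inner \<pi> v (P *v v) = (\<Sum>x\<in>UNIV. \<Sum>y\<in>UNIV. (\<pi> x * P$x$y) * (v$x * v$y))"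
    by (simp add: wt_inner_def matrix_vector_mult_def sum_distrib_left ac_simps)
  also have "\<dots> \<le> (\<Sum>x\<in>UNIV. \<Sum>y\<in>UNIV. (\<pi> x * P$x$y) * (((v$x)\<^sup>2 + (v$y)\<^sup>2) / 2))"
  proof (intro sum_mono mult_left_mono)
    fix x y
    show "v$x * v$y \<le> ((v$x)\<^sup>2 + (v$y)\<^sup>2) / 2"
      using sum_squares_bound[of "v$x" "v$y"] by simp
    show "0 \<le> \<pi> x * P$x$y"
      using pi_pos[of x] P_nonneg[of x y] by simp
  qed
  also have "\<dots> = (\<Sum>x\<in>UNIV. \<Sum>y\<in>UNIV. (\<pi> x * P$x$y) * (v$x)\<^sup>2) / 2
                 + (\<Sum>x\<in>UNIV. \<Sum>y\<in>UNIV. (\<pi> x * P$x$y) * (v$y)\<^sup>2) / 2"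
    by (simp add: sum_divide_distrib sum.distrib[symmetric] add_divide_distrib[symmetric] distrib_left)
  also have "(\<Sum>x\<in>UNIV. \<Sum>y\<in>UNIV. (\<pi> x * P$x$y) * (v$x)\<^sup>2) = wt_inner \<pi> v v"
    by (simp add: wt_inner_def sum_distrib_right[symmetric] sum_distrib_left[symmetric] sum_P_row
        power2_eq_square mult.assoc)
  also have "(\<Sum>x\<in>UNIV. \<Sum>y\<in>UNIV. (\<pi> x * P$x$y) * (v$y)\<^sup>2) = wt_inner \<pi> v v"
    by (subst sum.swap) (simp add: wt_inner_def sum_distrib_right[symmetric] stationary
        power2_eq_square mult.assoc[symmetric])
  finally show ?thesis by (simp add: wt_inner_diff_right)
qed

lemma abs_mpow_mult_vector_le: "\<bar>(mpow P k *v v) $ x\<bar> \<le> (\<Sum>y\<in>UNIV. \<bar>v $ y\<bar>)"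
proof -
  have "\<bar>(mpow P k *v v) $ x\<bar> \<le> (\<Sum>y\<in>UNIV. mpow P k $ x $ y * \<bar>v $ y\<bar>)"
    unfolding matrix_vector_mult_def vec_lambda_beta
    by (rule order_trans[OF sum_abs]) (simp add: abs_mult mpow_nonneg)
  also have "\<dots> \<le> (\<Sum>y\<in>UNIV. \<bar>v $ y\<bar>)"
    by (intro sum_mono mult_left_le_one_le) (auto simp: mpow_nonneg mpow_le_1)
  finally show ?thesis .
qed

lemma abs_wt_inner_mpow_le:
  "\<bar>wt_inner \<pi> g (mpow P k *v v)\<bar> \<le> (\<Sum>x\<in>UNIV. \<pi> x * \<bar>g $ x\<bar>) * (\<Sum>y\<in>UNIV. \<bar>v $ y\<bar>)"
proof -
  have "\<bar>wt_inner \<pi> g (mpow P k *v v)\<bar> \<le> (\<Sum>x\<in>UNIV. \<pi> x * \<bar>g $ x\<bar> * \<bar>(mpow P k *v v) $ x\<bar>)"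
    unfolding wt_inner_def by (rule order_trans[OF sum_abs]) (simp add: abs_mult less_imp_le[OF pi_pos])
  also have "\<dots> \<le> (\<Sum>x\<in>UNIV. \<pi> x * \<bar>g $ x\<bar> * (\<Sum>y\<in>UNIV. \<bar>v $ y\<bar>))"
    by (intro sum_mono mult_left_mono abs_mpow_mult_vector_le) (simp add: less_imp_le[OF pi_pos])
  finally show ?thesis by (simp add: sum_distrib_right)
qed

end

locale irreducible_chain = stationary_chain +
  assumes irreducible: "irreducible_tm P"
begin

lemma harmonic_imp_const:
  assumes h: "P *v h = h"
  obtains c where "h = vec c"
proof -
  have "Max (range (($) h)) \<in> range (($) h)"
    by (rule Max_in) auto
  then obtain x0 where max: "Max (range (($) h)) = h $ x0"
    by blast
  have x0: "h $ x \<le> h $ x0" for x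
    unfolding max[symmetric] by (rule Max_ge) auto
  have "h $ y = h $ x0" for y
  proof -
    obtain k where k: "mpow P k $ x0 $ y > 0"
      using irreducible by (auto simp: irreducible_tm_def)
    have "(\<Sum>z\<in>UNIV. mpow P k $ x0 $ z * (h $ x0 - h $ z))
          = h $ x0 * (\<Sum>z\<in>UNIV. mpow P k $ x0 $ z) - (mpow P k *v h) $ x0"
      by (simp add: matrix_vector_mult_def algebra_simps sum_subtractf sum_distrib_left)
    also have "\<dots> = 0"
      by (simp add: sum_mpow_row mpow_fixed_point[OF h])
    finally have "mpow P k $ x0 $ y * (h $ x0 - h $ y) = 0"
      using x0 mpow_nonneg by (subst (asm) sum_nonneg_eq_0_iff) auto
    then show ?thesis using k by simp
  qed
  then have "h = vec (h $ x0)" by (simp add: vec_eq_iff)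
  then show ?thesis by (rule that)
qed

text \<open>Adding the matrix whose rows all equal \<open>\<pi>\<close> makes \<open>I - P\<close> invertible: by irreducibility the
  kernel of \<open>I - P\<close> consists of the constants, on which the added matrix acts as the identity.\<close>
lemma poisson_solvable:
  assumes g: "wt_mean \<pi> g = 0"
  obtains h where "h - P *v h = g" "wt_mean \<pi> h = 0"
proof -
  define L where "L = mat 1 - P + (\<chi> x y. \<pi> y)"
  have "(\<chi> x y. \<pi> y) *v h = vec (wt_mean \<pi> h)" for h
    by (simp add: vec_eq_iff matrix_vector_mult_def wt_mean_def)
  then have L: "L *v h = h - P *v h + vec (wt_mean \<pi> h)" for h
    by (simp add: L_def algebra_simps)
  have mean_L: "wt_mean \<pi> (L *v h) = wt_mean \<pi> h" for h
    by (simp add: L wt_mean_add wt_mean_diff wt_mean_P wt_mean_vec sum_pi)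
  have "inj ((*v) L)"
  proof (rule injI)
    fix a b assume "L *v a = L *v b"
    then have L0: "L *v (a - b) = 0" by (simp add: matrix_vector_mult_diff_distrib)
    then have mean0: "wt_mean \<pi> (a - b) = 0" using mean_L[of "a - b"] by (simp add: wt_mean_def)
    then have "P *v (a - b) = a - b" using L0 by (simp add: L)
    then obtain c where c: "a - b = vec c" by (rule harmonic_imp_const)
    then have "c = 0" using mean0 by (simp add: wt_mean_vec sum_pi)
    then show "a = b" using c by simp
  qed
  then have "surj ((*v) L)"
    by (rule linear_inj_imp_surj[OF matrix_vector_mul_linear])
  then obtain h where h: "L *v h = g" by (metis surjD)
  then have "wt_mean \<pi> h = 0" using mean_L[of h] g by simp
  with h show ?thesis by (intro that) (simp_all add: L)
qed

end

locale reversible_chain = stationary_chain +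
  assumes reversible: "reversible P \<pi>"
begin

lemma detailed_balance: "\<pi> x * P$x$y = \<pi> y * P$y$x"
  using reversible by (simp add: reversible_def)

lemma wt_inner_P_commute: "wt_inner \<pi> u (P *v v) = wt_inner \<pi> (P *v u) v"
proof -
  have "wt_inner \<pi> u (P *v v) = (\<Sum>x\<in>UNIV. \<Sum>y\<in>UNIV. (\<pi> x * P$x$y) * u$x * v$y)"
    by (simp add: wt_inner_def matrix_vector_mult_def sum_distrib_left ac_simps)
  also have "\<dots> = (\<Sum>x\<in>UNIV. \<Sum>y\<in>UNIV. (\<pi> y * P$y$x) * u$x * v$y)"
    by (simp add: detailed_balance)
  also have "\<dots> = wt_inner \<pi> (P *v u) v"
    by (subst sum.swap)
      (simp add: wt_inner_def matrix_vector_mult_def sum_distrib_left sum_distrib_right ac_simps)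
  finally show ?thesis .
qed

text \<open>Variational principle: \<open>\<langle>g, h\<rangle>\<close> is the maximum of \<open>2\<langle>g, u\<rangle> - \<langle>u, (I - P) u\<rangle>\<close>, the gap being the
  Dirichlet form of \<open>u - h\<close>.\<close>
lemma wt_inner_poisson_ge:
  assumes h: "h - P *v h = g"
  shows "2 * wt_inner \<pi> g u - wt_inner \<pi> u (u - P *v u) \<le> wt_inner \<pi> g h"
proof -
  have "wt_inner \<pi> h (u - P *v u) = wt_inner \<pi> (h - P *v h) u"
    by (simp add: wt_inner_diff_left wt_inner_diff_right wt_inner_P_commute)
  then have hu: "wt_inner \<pi> h (u - P *v u) = wt_inner \<pi> g u"
    using h by simp
  have e: "(u - h) - P *v (u - h) = (u - P *v u) - g"
    using h by (simp add: matrix_vector_mult_diff_distrib algebra_simps)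
  have "wt_inner \<pi> (u - h) ((u - h) - P *v (u - h)) = wt_inner \<pi> (u - h) ((u - P *v u) - g)"
    by (simp only: e)
  also have "\<dots>
      = wt_inner \<pi> u (u - P *v u) - wt_inner \<pi> u g - wt_inner \<pi> h (u - P *v u) + wt_inner \<pi> h g"
    unfolding wt_inner_diff_left wt_inner_diff_right[of _ _ "u - P *v u" g] by simp
  also have "\<dots> = wt_inner \<pi> u (u - P *v u) - 2 * wt_inner \<pi> g u + wt_inner \<pi> g h"
    using hu wt_inner_commute[of \<pi> u g] wt_inner_commute[of \<pi> h g] by simp
  finally show ?thesis using dirichlet_form_nonneg[of "u - h"] by simp
qed

end

lemma reversible_imp_stationary:
  assumes "transition_matrix P" "reversible P \<pi>"
  shows "(\<Sum>x\<in>UNIV. \<pi> x * P$x$y) = \<pi> y"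
proof -
  have "(\<Sum>x\<in>UNIV. \<pi> x * P$x$y) = \<pi> y * (\<Sum>x\<in>UNIV. P$y$x)"
    using assms(2) by (simp add: reversible_def sum_distrib_left)
  also have "\<dots> = \<pi> y"
    using assms(1) by (simp add: transition_matrix_def)
  finally show ?thesis .
qed

locale irreducible_reversible_chain = irreducible_chain + reversible_chain

lemma irreducible_reversible_chainI:
  assumes "prob_dist \<pi>" "transition_matrix P" "reversible P \<pi>" "irreducible_tm P"
  shows "irreducible_reversible_chain P \<pi>"
proof -
  interpret stationary_chain P \<pi>
    using assms(1,2) reversible_imp_stationary[OF assms(2,3)] by unfold_locales
  show ?thesis
    using assms(3,4) by unfold_locales
qed

section \<open>Path sums\<close>

lemma paths_0: "paths 0 = {\<lambda>_. undefined}"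
  by (simp add: paths_def)

lemma sum_paths_Suc:
  "(\<Sum>s\<in>paths (Suc N). G s) = (\<Sum>s\<in>paths N. \<Sum>y\<in>UNIV. G (s(N := y)))"
proof -
  have eq: "paths (Suc N) = (\<lambda>(y, s). s(N := y)) ` (UNIV \<times> paths N)"
    unfolding paths_def lessThan_Suc by (rule PiE_insert_eq)
  have inj: "inj_on (\<lambda>(y, s). s(N := y)) (UNIV \<times> paths N)"
    unfolding paths_def using inj_combinator[of N "{..<N}" "\<lambda>_. UNIV"] by simp
  have "(\<Sum>s\<in>paths (Suc N). G s) = (\<Sum>y\<in>UNIV. \<Sum>s\<in>paths N. G (s(N := y)))"
    unfolding eq by (subst sum.reindex[OF inj]) (simp add: sum.cartesian_product split_beta)
  also have "\<dots> = (\<Sum>s\<in>paths N. \<Sum>y\<in>UNIV. G (s(N := y)))"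
    by (rule sum.swap)
  finally show ?thesis .
qed

definition nat_dist :: "nat \<Rightarrow> nat \<Rightarrow> nat" where
  "nat_dist i j = (if i \<le> j then j - i else i - j)"

context stationary_chain
begin

lemma path_prob_upd:
  assumes "N \<ge> 1"
  shows "path_prob P \<pi> (Suc N) (s(N := y)) = path_prob P \<pi> N s * P $ s (N - 1) $ y"
proof -
  obtain M where M: "N = Suc M" using assms by (cases N) auto
  have "(\<Prod>k<N. P $ (s(N := y)) k $ (s(N := y)) (Suc k))
        = (\<Prod>k<M. P $ s k $ s (Suc k)) * P $ s M $ y"
    unfolding M by (simp add: prod.lessThan_Suc)
  then show ?thesis using M by (simp add: path_prob_def)
qed

lemma sum_paths_Suc_path_prob:
  assumes "N \<ge> 1"
  shows "(\<Sum>s\<in>paths (Suc N). path_prob P \<pi> (Suc N) s * G s)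
       = (\<Sum>s\<in>paths N. path_prob P \<pi> N s * (\<Sum>y\<in>UNIV. P $ s (N - 1) $ y * G (s(N := y))))"
  by (simp add: sum_paths_Suc path_prob_upd[OF assms] sum_distrib_left ac_simps)

lemma sum_paths_path_prob_truncate:
  assumes "1 \<le> M" "M \<le> N"
    and G: "\<And>s s'. (\<And>k. k < M \<Longrightarrow> s k = s' k) \<Longrightarrow> G s = G s'"
  shows "(\<Sum>s\<in>paths N. path_prob P \<pi> N s * G s) = (\<Sum>s\<in>paths M. path_prob P \<pi> M s * G s)"
  using assms(2)
proof (induction N rule: dec_induct)
  case base
  show ?case ..
next
  case (step N)
  have "(\<Sum>y\<in>UNIV. P $ s (N - 1) $ y * G (s(N := y))) = G s" for s
  proof -
    have "(\<Sum>y\<in>UNIV. P $ s (N - 1) $ y * G (s(N := y))) = (\<Sum>y\<in>UNIV. P $ s (N - 1) $ y * G s)"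
      using step(1) by (intro sum.cong refl arg_cong2[where f="(*)"] G) auto
    then show ?thesis by (simp add: sum_distrib_right[symmetric] sum_P_row)
  qed
  then show ?case
    using step assms(1) by (simp add: sum_paths_Suc_path_prob)
qed

lemma sum_paths_last:
  assumes "1 \<le> N"
  shows "(\<Sum>s\<in>paths N. path_prob P \<pi> N s * w $ s (N - 1)) = wt_mean \<pi> w"
  using assms
proof (induction N arbitrary: w rule: dec_induct)
  case base
  show ?case by (simp add: sum_paths_Suc[where N=0] paths_0 path_prob_def wt_mean_def)
next
  case (step N)
  have "(\<Sum>s\<in>paths (Suc N). path_prob P \<pi> (Suc N) s * w $ s (Suc N - 1))
      = (\<Sum>s\<in>paths N. path_prob P \<pi> N s * (P *v w) $ s (N - 1))"
    using step(1) by (simp add: sum_paths_Suc_path_prob matrix_vector_mult_def)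
  also have "\<dots> = wt_mean \<pi> w"
    using step.IH[of "P *v w"] by (simp add: wt_mean_P)
  finally show ?case .
qed

lemma sum_paths_pair_last:
  assumes "i < N"
  shows "(\<Sum>s\<in>paths N. path_prob P \<pi> N s * (u $ s i * v $ s (N - 1)))
       = (\<Sum>s\<in>paths (Suc i). path_prob P \<pi> (Suc i) s * (u $ s i * (mpow P (N - 1 - i) *v v) $ s i))"
  using Suc_leI[OF assms]
proof (induction N arbitrary: v rule: dec_induct)
  case base
  show ?case by simp
next
  case (step N)
  have "(\<Sum>s\<in>paths (Suc N). path_prob P \<pi> (Suc N) s * (u $ s i * v $ s (Suc N - 1)))
      = (\<Sum>s\<in>paths N. path_prob P \<pi> N s * (u $ s i * (P *v v) $ s (N - 1)))"
    using step(1) by (subst sum_paths_Suc_path_prob)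
      (auto simp: matrix_vector_mult_def sum_distrib_left ac_simps)
  also have "\<dots> = (\<Sum>s\<in>paths (Suc i).
      path_prob P \<pi> (Suc i) s * (u $ s i * (mpow P (N - 1 - i) *v (P *v v)) $ s i))"
    by (rule step.IH)
  also have "mpow P (N - 1 - i) *v (P *v v) = mpow P (Suc N - 1 - i) *v v"
  proof -
    have "Suc N - 1 - i = Suc (N - 1 - i)" using step(1) by simp
    then show ?thesis by (simp only: mpow_Suc_mult_vector)
  qed
  finally show ?case .
qed

lemma sum_paths_pair:
  assumes "i \<le> j" "j < N"
  shows "(\<Sum>s\<in>paths N. path_prob P \<pi> N s * (u $ s i * v $ s j)) = wt_inner \<pi> u (mpow P (j - i) *v v)"
proof -
  have "(\<Sum>s\<in>paths N. path_prob P \<pi> N s * (u $ s i * v $ s j))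
      = (\<Sum>s\<in>paths (Suc j). path_prob P \<pi> (Suc j) s * (u $ s i * v $ s (Suc j - 1)))"
    using assms by (subst sum_paths_path_prob_truncate[where M="Suc j"]) auto
  also have "\<dots> = (\<Sum>s\<in>paths (Suc i).
      path_prob P \<pi> (Suc i) s * (\<chi> x. u $ x * (mpow P (j - i) *v v) $ x) $ s (Suc i - 1))"
    using assms by (subst sum_paths_pair_last) auto
  also have "\<dots> = wt_inner \<pi> u (mpow P (j - i) *v v)"
    by (subst sum_paths_last) (auto simp: wt_mean_def wt_inner_def mult.assoc)
  finally show ?thesis .
qed

lemma sum_paths_pair_nat_dist:
  assumes "i < N" "j < N"
  shows "(\<Sum>s\<in>paths N. path_prob P \<pi> N s * (u $ s i * u $ s j))
       = wt_inner \<pi> u (mpow P (nat_dist i j) *v u)"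
proof (cases "i \<le> j")
  case True
  then show ?thesis using assms sum_paths_pair[of i j N u u] by (simp add: nat_dist_def)
next
  case False
  then show ?thesis using assms sum_paths_pair[of j i N u u] by (simp add: nat_dist_def mult.commute)
qed

end

section \<open>Asymptotic variance\<close>

lemma sum_nat_dist_Suc:
  fixes a :: "nat \<Rightarrow> real"
  shows "(\<Sum>i<Suc N. \<Sum>j<Suc N. a (nat_dist i j))
       = (\<Sum>i<N. \<Sum>j<N. a (nat_dist i j)) + 2 * (\<Sum>k<Suc N. a k) - a 0"
proof -
  have rev: "(\<Sum>j<Suc N. a (N - j)) = (\<Sum>k<Suc N. a k)"
    using sum.nat_diff_reindex[of a "Suc N"] by simp
  have "(\<Sum>i<Suc N. \<Sum>j<Suc N. a (nat_dist i j))
      = (\<Sum>i<N. \<Sum>j<N. a (nat_dist i j)) + (\<Sum>i<N. a (nat_dist i N)) + (\<Sum>j<Suc N. a (nat_dist N j))"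
    by (simp add: sum.distrib)
  also have "(\<Sum>i<N. a (nat_dist i N)) = (\<Sum>j<Suc N. a (N - j)) - a 0"
    by (simp add: nat_dist_def)
  also have "(\<Sum>j<Suc N. a (nat_dist N j)) = (\<Sum>j<Suc N. a (N - j))"
    by (intro sum.cong) (auto simp: nat_dist_def)
  finally show ?thesis unfolding rev by simp
qed

lemma lim_div_real_affine:
  fixes s b :: "nat \<Rightarrow> real"
  assumes s: "\<And>N. s N = real N * C - b N" and b: "\<And>N. \<bar>b N\<bar> \<le> B"
  shows "lim (\<lambda>N. s N / real N) = C"
proof (rule limI)
  have "(\<lambda>N. b N / real N) \<longlonglongrightarrow> 0"
  proof (rule Lim_null_comparison)
    show "\<forall>\<^sub>F N in sequentially. norm (b N / real N) \<le> B / real N"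
      using b by (intro always_eventually allI) (simp add: divide_right_mono)
    show "(\<lambda>N. B / real N) \<longlonglongrightarrow> 0"
      by (rule lim_const_over_n)
  qed
  then have "(\<lambda>N. C - b N / real N) \<longlonglongrightarrow> C"
    using tendsto_diff[OF tendsto_const] by fastforce
  moreover have "\<forall>\<^sub>F N in sequentially. C - b N / real N = s N / real N"
    using eventually_gt_at_top[of 0] by eventually_elim (simp add: s field_simps)
  ultimately show "(\<lambda>N. s N / real N) \<longlonglongrightarrow> C"
    by (rule Lim_transform_eventually)
qed

context stationary_chain
begin

lemma partial_sum_var_eq:
  "partial_sum_var f P \<pi> N
     = (\<Sum>i<N. \<Sum>j<N. wt_inner \<pi> (centered \<pi> f) (mpow P (nat_dist i j) *v centered \<pi> f))"
proof (cases "N = 0")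
  case True
  then show ?thesis by (simp add: partial_sum_var_def paths_0)
next
  case False
  define fv :: "real^'n" where "fv = (\<chi> x. f x)"
  define m where "m = wt_mean \<pi> fv"
  define g where "g = centered \<pi> f"
  have fv: "fv = g + vec m"
    by (simp add: fv_def m_def g_def centered_def wt_mean_def vec_eq_iff)
  have g0: "wt_mean \<pi> g = 0"
    by (simp add: g_def wt_mean_centered sum_pi)
  have f: "f (s i) = fv $ s i" for s i
    by (simp add: fv_def)
  have "(\<Sum>s\<in>paths N. path_prob P \<pi> N s * (\<Sum>i<N. f (s i))\<^sup>2)
      = (\<Sum>i<N. \<Sum>j<N. \<Sum>s\<in>paths N. path_prob P \<pi> N s * (fv $ s i * fv $ s j))"
    by (simp add: f power2_eq_square sum_product sum_distrib_left sum.swap[of _ "paths N"] ac_simps)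
  also have "\<dots> = (\<Sum>i<N. \<Sum>j<N. wt_inner \<pi> fv (mpow P (nat_dist i j) *v fv))"
    by (intro sum.cong refl sum_paths_pair_nat_dist) auto
  finally have second_moment: "(\<Sum>s\<in>paths N. path_prob P \<pi> N s * (\<Sum>i<N. f (s i))\<^sup>2)
      = (\<Sum>i<N. \<Sum>j<N. wt_inner \<pi> fv (mpow P (nat_dist i j) *v fv))" .
  have "(\<Sum>s\<in>paths N. path_prob P \<pi> N s * (\<Sum>i<N. f (s i)))
      = (\<Sum>i<N. \<Sum>s\<in>paths N. path_prob P \<pi> N s * (fv $ s i * vec 1 $ s i))"
    by (simp add: f sum_distrib_left sum.swap[of _ "paths N"])
  also have "\<dots> = (\<Sum>i<N. wt_inner \<pi> fv (mpow P (i - i) *v vec 1))"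
    by (intro sum.cong refl sum_paths_pair) auto
  also have "\<dots> = N * m"
    by (simp add: mpow_fixed_point[OF P_vec] wt_inner_vec_right m_def del: vec_1)
  finally have first_moment: "(\<Sum>s\<in>paths N. path_prob P \<pi> N s * (\<Sum>i<N. f (s i))) = N * m" .
  have "wt_inner \<pi> fv (mpow P k *v fv) = wt_inner \<pi> g (mpow P k *v g) + m\<^sup>2" for k
    by (simp add: fv matrix_vector_right_distrib mpow_fixed_point[OF P_vec] wt_inner_add_left
        wt_inner_add_right wt_inner_vec_left wt_inner_vec_right wt_mean_mpow wt_mean_add g0
        wt_mean_vec sum_pi power2_eq_square)
  then show ?thesis
    unfolding partial_sum_var_def first_moment second_moment g_def
    by (simp add: sum.distrib power2_eq_square)
qed

text \<open>Since \<open>P\<^sup>k g = P\<^sup>k h\<^sub>0 - P\<^sup>k\<^sup>+\<^sup>1 h\<^sub>0\<close>, the correlations \<open>\<langle>g, P\<^sup>k g\<rangle>\<close> telescope, and so do their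
  tails via \<open>h\<^sub>1\<close>: the variance is linear in \<open>N\<close> up to a term bounded uniformly in \<open>N\<close>.\<close>
lemma partial_sum_var_telescope:
  fixes f :: "'n \<Rightarrow> real"
  defines "g \<equiv> centered \<pi> f"
  assumes h0: "h0 - P *v h0 = g" and h1: "h1 - P *v h1 = h0"
  shows "partial_sum_var f P \<pi> N
    = real N * (2 * wt_inner \<pi> g h0 - wt_inner \<pi> g g)
      - 2 * (wt_inner \<pi> g (P *v h1) - wt_inner \<pi> g (mpow P (Suc N) *v h1))"
proof -
  define a where "a k = wt_inner \<pi> g (mpow P k *v g)" for k
  have a: "a k = wt_inner \<pi> g (mpow P k *v h0) - wt_inner \<pi> g (mpow P (Suc k) *v h0)" for k
    by (simp add: a_def h0[symmetric] matrix_vector_mult_diff_distrib wt_inner_diff_right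
        matrix_vector_mul_assoc)
  have h0_tel: "wt_inner \<pi> g (mpow P k *v h0)
      = wt_inner \<pi> g (mpow P k *v h1) - wt_inner \<pi> g (mpow P (Suc k) *v h1)" for k
    by (simp add: h1[symmetric] matrix_vector_mult_diff_distrib wt_inner_diff_right
        matrix_vector_mul_assoc)
  have sum_a: "(\<Sum>k<N. a k) = wt_inner \<pi> g h0 - wt_inner \<pi> g (mpow P N *v h0)" for N
    by (induction N) (simp_all add: a)
  have "(\<Sum>i<N. \<Sum>j<N. a (nat_dist i j))
      = real N * (2 * wt_inner \<pi> g h0 - wt_inner \<pi> g g)
        - 2 * (wt_inner \<pi> g (P *v h1) - wt_inner \<pi> g (mpow P (Suc N) *v h1))"
  proof (induction N)
    case 0
    then show ?case by simp
  next
    case (Suc N)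
    have "a 0 = wt_inner \<pi> g g" by (simp add: a_def)
    with Suc show ?case
      unfolding sum_nat_dist_Suc sum_a h0_tel by (simp add: algebra_simps)
  qed
  then show ?thesis
    unfolding partial_sum_var_eq a_def g_def .
qed

end

context irreducible_chain
begin

lemma asym_var_eq:
  fixes f
  defines "g \<equiv> centered \<pi> f"
  assumes h: "h - P *v h = g"
  shows "asym_var f P \<pi> = 2 * wt_inner \<pi> g h - wt_inner \<pi> g g"
proof -
  define h0 where "h0 = h - vec (wt_mean \<pi> h)"
  have h0: "h0 - P *v h0 = g"
    using h by (simp add: h0_def matrix_vector_mult_diff_distrib P_vec)
  have "wt_mean \<pi> h0 = 0"
    by (simp add: h0_def wt_mean_diff wt_mean_vec sum_pi)
  then obtain h1 where h1: "h1 - P *v h1 = h0"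
    by (rule poisson_solvable)
  have "wt_inner \<pi> g h0 = wt_inner \<pi> g h"
    by (simp add: h0_def g_def wt_inner_diff_right wt_inner_vec_right wt_mean_centered sum_pi)
  moreover have "lim (\<lambda>N. partial_sum_var f P \<pi> N / real N) = 2 * wt_inner \<pi> g h0 - wt_inner \<pi> g g"
  proof (rule lim_div_real_affine)
    show "partial_sum_var f P \<pi> N = real N * (2 * wt_inner \<pi> g h0 - wt_inner \<pi> g g)
        - 2 * (wt_inner \<pi> g (P *v h1) - wt_inner \<pi> g (mpow P (Suc N) *v h1))" for N
      using partial_sum_var_telescope h0 h1 unfolding g_def .
    show "\<bar>2 * (wt_inner \<pi> g (P *v h1) - wt_inner \<pi> g (mpow P (Suc N) *v h1))\<bar>
        \<le> 4 * ((\<Sum>x\<in>UNIV. \<pi> x * \<bar>g $ x\<bar>) * (\<Sum>y\<in>UNIV. \<bar>h1 $ y\<bar>))" for N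
      using abs_wt_inner_mpow_le[of g "Suc 0" h1] abs_wt_inner_mpow_le[of g "Suc N" h1] by simp
  qed
  ultimately show ?thesis
    by (simp add: asym_var_def)
qed

end

section \<open>Efficiency dominance\<close>

text \<open>Test \<open>f = u - Q u\<close>, for which \<open>u\<close> itself solves the Poisson equation of \<open>Q\<close>.\<close>
lemma wt_inner_le_if_efficiency_dominates:
  assumes P: "irreducible_reversible_chain P \<pi>" and Q: "irreducible_reversible_chain Q \<pi>"
    and dom: "efficiency_dominates P Q \<pi>"
  shows "wt_inner \<pi> u (P *v u) \<le> wt_inner \<pi> u (Q *v u)"
proof -
  interpret P: irreducible_reversible_chain P \<pi> by (rule P)
  interpret Q: irreducible_reversible_chain Q \<pi> by (rule Q)
  define g where "g = u - Q *v u"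
  have g0: "wt_mean \<pi> g = 0"
    by (simp add: g_def wt_mean_diff Q.wt_mean_P)
  then have g: "centered \<pi> (($) g) = g"
    by (rule centered_of_mean_zero)
  obtain hP where hP: "hP - P *v hP = g"
    using g0 by (rule P.poisson_solvable)
  have "asym_var (($) g) P \<pi> \<le> asym_var (($) g) Q \<pi>"
    using dom by (simp add: efficiency_dominates_def)
  moreover have "asym_var (($) g) P \<pi> = 2 * wt_inner \<pi> g hP - wt_inner \<pi> g g"
    using P.asym_var_eq[of hP "($) g"] hP by (simp add: g)
  moreover have "asym_var (($) g) Q \<pi> = 2 * wt_inner \<pi> g u - wt_inner \<pi> g g"
    using Q.asym_var_eq[of u "($) g"] by (simp add: g g_def[symmetric])
  ultimately have "wt_inner \<pi> g hP \<le> wt_inner \<pi> g u"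
    by simp
  moreover have "2 * wt_inner \<pi> g u - wt_inner \<pi> u (u - P *v u) \<le> wt_inner \<pi> g hP"
    by (rule P.wt_inner_poisson_ge[OF hP])
  moreover have "wt_inner \<pi> g u = wt_inner \<pi> u (u - Q *v u)"
    by (simp add: g_def wt_inner_commute)
  ultimately show ?thesis
    by (simp add: wt_inner_diff_right)
qed

lemma efficiency_dominates_if_wt_inner_le:
  assumes P: "irreducible_reversible_chain P \<pi>" and Q: "irreducible_reversible_chain Q \<pi>"
    and le: "\<And>u. wt_inner \<pi> u (P *v u) \<le> wt_inner \<pi> u (Q *v u)"
  shows "efficiency_dominates P Q \<pi>"
  unfolding efficiency_dominates_def
proof
  interpret P: irreducible_reversible_chain P \<pi> by (rule P)
  interpret Q: irreducible_reversible_chain Q \<pi> by (rule Q)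
  fix f
  define g where "g = centered \<pi> f"
  have g0: "wt_mean \<pi> g = 0"
    by (simp add: g_def wt_mean_centered P.sum_pi)
  obtain hP where hP: "hP - P *v hP = g"
    using g0 by (rule P.poisson_solvable)
  obtain hQ where hQ: "hQ - Q *v hQ = g"
    using g0 by (rule Q.poisson_solvable)
  have "wt_inner \<pi> hP (hP - Q *v hP) \<le> wt_inner \<pi> hP (hP - P *v hP)"
    using le[of hP] by (simp add: wt_inner_diff_right)
  also have "\<dots> = wt_inner \<pi> g hP"
    using hP by (simp add: wt_inner_commute)
  finally have "wt_inner \<pi> g hP \<le> wt_inner \<pi> g hQ"
    using Q.wt_inner_poisson_ge[OF hQ, of hP] by simp
  then show "asym_var f P \<pi> \<le> asym_var f Q \<pi>"
    using P.asym_var_eq[of hP f] Q.asym_var_eq[of hQ f] hP hQ by (simp add: g_def)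
qed

lemma efficiency_dominates_iff_wt_inner_le:
  assumes "irreducible_reversible_chain P \<pi>" and "irreducible_reversible_chain Q \<pi>"
  shows "efficiency_dominates P Q \<pi> \<longleftrightarrow> (\<forall>u. wt_inner \<pi> u (P *v u) \<le> wt_inner \<pi> u (Q *v u))"
  using wt_inner_le_if_efficiency_dominates[OF assms] efficiency_dominates_if_wt_inner_le[OF assms]
  by blast

section \<open>Eigenvalues and quadratic forms\<close>

lemma inner_mult_vector_commute:
  fixes K :: "real^'n^'n"
  assumes "transpose K = K"
  shows "u \<bullet> (K *v v) = v \<bullet> (K *v u)"
  by (metis assms dot_lmul_matrix inner_commute vector_transpose_matrix)

lemma transpose_diff: "transpose (A - B) = transpose A - transpose B"
  by (simp add: transpose_def vec_eq_iff)

lemma transpose_diag_mat [simp]: "transpose (diag_mat w) = diag_mat w"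
  by (simp add: transpose_def diag_mat_def vec_eq_iff)

lemma diag_mat_1: "diag_mat (\<lambda>_. 1) = mat 1"
  by (simp add: diag_mat_def mat_def)

lemma diag_mat_mult_vector: "diag_mat w *v u = (\<chi> x. w x * u $ x)"
  by (simp add: diag_mat_def matrix_vector_mult_def vec_eq_iff if_distrib if_distribR cong: if_cong)

lemma inner_diag_mat: "u \<bullet> (diag_mat w *v u) = (\<Sum>x\<in>UNIV. w x * (u $ x)\<^sup>2)"
  by (simp add: diag_mat_mult_vector inner_vec_def power2_eq_square ac_simps)

lemma inner_diag_mat_nonneg: "(\<And>x. w x \<ge> 0) \<Longrightarrow> 0 \<le> u \<bullet> (diag_mat w *v u)"
  by (simp add: inner_diag_mat sum_nonneg)

lemma inner_diag_mat_pos: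
  assumes w: "\<And>x. w x > 0" and u: "u \<noteq> 0"
  shows "0 < u \<bullet> (diag_mat w *v u)"
proof -
  obtain x0 where x0: "u $ x0 \<noteq> 0"
    using u by (auto simp: vec_eq_iff)
  have pos: "0 < w x0 * (u $ x0)\<^sup>2"
    using x0 w by simp
  have "0 < (\<Sum>x\<in>UNIV. w x * (u $ x)\<^sup>2)"
    by (rule sum_pos2[of UNIV x0]) (use pos w in \<open>auto intro: mult_nonneg_nonneg[OF less_imp_le]\<close>)
  then show ?thesis by (simp add: inner_diag_mat)
qed

lemma nonneg_quadratic_linear_coeff_zero:
  fixes a b :: real
  assumes "\<And>t. 0 \<le> a * t + b * t\<^sup>2"
  shows "a = 0"
proof (rule ccontr)
  assume a: "a \<noteq> 0"
  define d where "d = \<bar>b\<bar> + 1"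
  have d: "d > 0" by (simp add: d_def)
  have "(a * (- a / d) + b * (- a / d)\<^sup>2) * d\<^sup>2 = a\<^sup>2 * (b - d)"
    using d by (simp add: field_simps power2_eq_square)
  also have "\<dots> < 0"
    using a by (intro mult_pos_neg) (auto simp: d_def)
  finally show False
    using assms[of "- a / d"] by (simp add: mult_less_0_iff)
qed

text \<open>A positive semidefinite form vanishes at \<open>v\<close> only if \<open>v\<close> is in the kernel: otherwise moving
  from \<open>v\<close> in the direction \<open>S v\<close> makes the form negative to first order.\<close>
lemma psd_form_zero_imp_kernel:
  fixes S :: "real^'n^'n"
  assumes sym: "transpose S = S" and psd: "\<And>u. 0 \<le> u \<bullet> (S *v u)" and v: "v \<bullet> (S *v v) = 0"
  shows "S *v v = 0"
proof -
  have "2 * (z \<bullet> (S *v v)) = 0" for z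
  proof (rule nonneg_quadratic_linear_coeff_zero)
    fix t :: real
    have "(v + t *\<^sub>R z) \<bullet> (S *v (v + t *\<^sub>R z))
        = v \<bullet> (S *v v) + t * (z \<bullet> (S *v v)) + t * (v \<bullet> (S *v z)) + t\<^sup>2 * (z \<bullet> (S *v z))"
      by (simp add: matrix_vector_right_distrib matrix_vector_mult_scaleR inner_add_left
          inner_add_right power2_eq_square algebra_simps)
    then show "0 \<le> 2 * (z \<bullet> (S *v v)) * t + (z \<bullet> (S *v z)) * t\<^sup>2"
      using psd[of "v + t *\<^sub>R z"] v inner_mult_vector_commute[OF sym, of v z]
      by (simp add: algebra_simps power2_eq_square)
  qed
  from this[of "S *v v"] show ?thesis by simp
qed

lemma is_eigenvalue_of_real:
  assumes u: "u \<noteq> 0" and eq: "M *v u = c *\<^sub>R u"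
  shows "is_eigenvalue M (of_real c)"
  unfolding is_eigenvalue_def
proof (intro exI conjI)
  show "(\<chi> x. complex_of_real (u $ x)) \<noteq> 0"
    using u by (auto simp: vec_eq_iff)
  have comp: "(\<Sum>y\<in>UNIV. complex_of_real (M $ x $ y) * complex_of_real (u $ y))
      = complex_of_real c * complex_of_real (u $ x)" for x
  proof -
    have "(\<Sum>y\<in>UNIV. complex_of_real (M $ x $ y) * complex_of_real (u $ y))
        = complex_of_real ((M *v u) $ x)"
      by (simp add: matrix_vector_mult_def)
    then show ?thesis
      using eq by simp
  qed
  show "cmat M *v (\<chi> x. complex_of_real (u $ x)) = of_real c *s (\<chi> x. complex_of_real (u $ x))"
    by (simp add: vec_eq_iff cmat_def matrix_vector_mult_def comp)
qed

lemma eigenvector_Re_Im: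
  assumes "cmat M *v v = c *s v"
  shows "M *v (\<chi> x. Re (v $ x)) = Re c *\<^sub>R (\<chi> x. Re (v $ x)) - Im c *\<^sub>R (\<chi> x. Im (v $ x))"
    and "M *v (\<chi> x. Im (v $ x)) = Re c *\<^sub>R (\<chi> x. Im (v $ x)) + Im c *\<^sub>R (\<chi> x. Re (v $ x))"
proof -
  have comp: "(\<Sum>y\<in>UNIV. complex_of_real (M $ x $ y) * v $ y) = c * v $ x" for x
    using assms by (simp add: vec_eq_iff cmat_def matrix_vector_mult_def)
  show "M *v (\<chi> x. Re (v $ x)) = Re c *\<^sub>R (\<chi> x. Re (v $ x)) - Im c *\<^sub>R (\<chi> x. Im (v $ x))"
    using arg_cong[OF comp, of Re] by (simp add: vec_eq_iff matrix_vector_mult_def)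
  show "M *v (\<chi> x. Im (v $ x)) = Re c *\<^sub>R (\<chi> x. Im (v $ x)) + Im c *\<^sub>R (\<chi> x. Re (v $ x))"
    using arg_cong[OF comp, of Im] by (simp add: vec_eq_iff matrix_vector_mult_def)
qed

text \<open>If \<open>M v = c v\<close> with \<open>v = a + i b\<close>, the forms of \<open>K = D M\<close> at \<open>a\<close> and \<open>b\<close> add up to \<open>Re c\<close> times a
  positive number, and their antisymmetric part to \<open>Im c\<close> times the same number.\<close>
lemma is_eigenvalue_nonneg_if_psd:
  fixes M :: "real^'n::finite^'n" and w :: "'n \<Rightarrow> real"
  defines "K \<equiv> diag_mat w ** M"
  assumes w: "\<And>x. w x > 0" and sym: "transpose K = K" and psd: "\<And>u. 0 \<le> u \<bullet> (K *v u)"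
    and c: "is_eigenvalue M c"
  shows "c \<in> \<real> \<and> 0 \<le> Re c"
proof -
  obtain v where v: "v \<noteq> 0" and ev: "cmat M *v v = c *s v"
    using c by (auto simp: is_eigenvalue_def)
  define a where "a = (\<chi> x. Re (v $ x))"
  define b where "b = (\<chi> x. Im (v $ x))"
  define D where "D = diag_mat w"
  have Ka: "K *v a = Re c *\<^sub>R (D *v a) - Im c *\<^sub>R (D *v b)"
    using eigenvector_Re_Im(1)[OF ev]
    by (simp add: K_def D_def a_def b_def matrix_vector_mul_assoc[symmetric]
        matrix_vector_mult_diff_distrib matrix_vector_mult_scaleR)
  have Kb: "K *v b = Re c *\<^sub>R (D *v b) + Im c *\<^sub>R (D *v a)"
    using eigenvector_Re_Im(2)[OF ev]
    by (simp add: K_def D_def a_def b_def matrix_vector_mul_assoc[symmetric]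
        matrix_vector_right_distrib matrix_vector_mult_scaleR)
  have Dab: "a \<bullet> (D *v b) = b \<bullet> (D *v a)"
    by (rule inner_mult_vector_commute) (simp add: D_def)
  define n where "n = a \<bullet> (D *v a) + b \<bullet> (D *v b)"
  have "a \<noteq> 0 \<or> b \<noteq> 0"
    using v by (auto simp: a_def b_def vec_eq_iff complex_eq_iff)
  then have "0 < a \<bullet> (D *v a) \<or> 0 < b \<bullet> (D *v b)"
    using inner_diag_mat_pos[OF w, of a] inner_diag_mat_pos[OF w, of b] by (auto simp: D_def)
  moreover have "0 \<le> a \<bullet> (D *v a)" "0 \<le> b \<bullet> (D *v b)"
    using inner_diag_mat_nonneg[of w] w unfolding D_def by (auto intro: less_imp_le)
  ultimately have n: "0 < n"
    unfolding n_def by linarith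
  have "a \<bullet> (K *v a) + b \<bullet> (K *v b) = Re c * n"
    by (simp add: Ka Kb n_def inner_diff_right inner_add_right Dab distrib_left)
  then have "0 \<le> Re c * n"
    using psd[of a] psd[of b] by linarith
  then have "0 \<le> Re c"
    using n by (simp add: zero_le_mult_iff)
  moreover have "a \<bullet> (K *v b) - b \<bullet> (K *v a) = Im c * n"
    by (simp add: Ka Kb n_def inner_diff_right inner_add_right Dab distrib_left)
  then have "Im c = 0"
    using inner_mult_vector_commute[OF sym, of a b] n by simp
  ultimately show ?thesis
    by (simp add: complex_is_Real_iff)
qed

lemma rayleigh_quotient_attains_min:
  fixes K :: "real^'n::finite^'n"
  assumes w: "\<And>x. w x > 0"
  obtains u0 lam where "u0 \<noteq> 0" "u0 \<bullet> (K *v u0) = lam * (u0 \<bullet> (diag_mat w *v u0))"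
    and "\<And>u. lam * (u \<bullet> (diag_mat w *v u)) \<le> u \<bullet> (K *v u)"
proof -
  define W where "W u = u \<bullet> (diag_mat w *v u)" for u :: "real^'n"
  define R where "R u = (u \<bullet> (K *v u)) / W u" for u
  have W_pos: "0 < W u" if "u \<noteq> 0" for u
    unfolding W_def using inner_diag_mat_pos[OF w that] .
  have "continuous_on (sphere 0 1) R"
    unfolding R_def
  proof (intro continuous_intros)
    show "continuous_on (sphere 0 1) W"
      unfolding W_def by (intro continuous_intros)
    show "\<forall>u\<in>sphere 0 1. W u \<noteq> 0"
    proof
      fix u :: "real^'n"
      assume "u \<in> sphere 0 1"
      then have "u \<noteq> 0" by auto
      then show "W u \<noteq> 0" using W_pos[of u] by linarith
    qed
  qed
  then obtain u0 where u0: "u0 \<in> sphere 0 1" and min: "\<And>u. u \<in> sphere 0 1 \<Longrightarrow> R u0 \<le> R u"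
    using continuous_attains_inf[of "sphere 0 1" R] by auto
  have "R u0 * W u \<le> u \<bullet> (K *v u)" for u
  proof (cases "u = 0")
    case True
    then show ?thesis by (simp add: W_def)
  next
    case False
    have "R u0 \<le> R ((1 / norm u) *\<^sub>R u)"
      using False by (intro min) simp
    also have "\<dots> = R u"
      using False by (simp add: R_def W_def matrix_vector_mult_scaleR)
    finally show ?thesis
      using W_pos[OF False] by (simp add: R_def pos_le_divide_eq)
  qed
  moreover have "u0 \<noteq> 0"
    using u0 by auto
  moreover from this have "u0 \<bullet> (K *v u0) = R u0 * W u0"
    using W_pos[of u0] by (simp add: R_def)
  ultimately show ?thesis
    using that unfolding W_def by blast
qed

text \<open>A minimiser \<open>u\<^sub>0\<close> of the Rayleigh quotient, with minimum \<open>\<lambda>\<close>, lies in the kernel of the positive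
  semidefinite matrix \<open>K - \<lambda> D\<close>; hence it is an eigenvector of \<open>M\<close> and \<open>\<lambda> \<ge> 0\<close>.\<close>
lemma psd_if_eigenvalues_nonneg:
  fixes M :: "real^'n::finite^'n" and w :: "'n \<Rightarrow> real"
  defines "K \<equiv> diag_mat w ** M"
  assumes w: "\<And>x. w x > 0" and sym: "transpose K = K" and eig: "eigenvalues_nonneg M"
  shows "0 \<le> u \<bullet> (K *v u)"
proof -
  obtain u0 lam where u0: "u0 \<noteq> 0" and min: "u0 \<bullet> (K *v u0) = lam * (u0 \<bullet> (diag_mat w *v u0))"
    and le: "\<And>u. lam * (u \<bullet> (diag_mat w *v u)) \<le> u \<bullet> (K *v u)"
    using rayleigh_quotient_attains_min[where w=w and K=K, OF w] by blast
  define S where "S = K - lam *\<^sub>R diag_mat w"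
  have S_form: "u \<bullet> (S *v u) = u \<bullet> (K *v u) - lam * (u \<bullet> (diag_mat w *v u))" for u
    by (simp add: S_def matrix_vector_mult_diff_rdistrib inner_diff_right
        scaleR_matrix_vector_assoc[symmetric])
  have "S *v u0 = 0"
  proof (rule psd_form_zero_imp_kernel)
    show "transpose S = S"
      by (simp add: S_def transpose_diff transpose_scalar sym)
    show "0 \<le> u \<bullet> (S *v u)" for u
      using le[of u] by (simp add: S_form)
    show "u0 \<bullet> (S *v u0) = 0"
      using min by (simp add: S_form)
  qed
  moreover have "S *v u0 = diag_mat w *v (M *v u0 - lam *\<^sub>R u0)"
    by (simp add: S_def K_def matrix_vector_mult_diff_rdistrib matrix_vector_mult_diff_distrib
        matrix_vector_mul_assoc matrix_vector_mult_scaleR scaleR_matrix_vector_assoc[symmetric])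
  ultimately have "M *v u0 = lam *\<^sub>R u0"
    by (simp add: diag_mat_mult_vector vec_eq_iff) (metis w less_irrefl)
  then have "is_eigenvalue M (of_real lam)"
    by (rule is_eigenvalue_of_real[OF u0])
  then have "0 \<le> lam"
    using eig unfolding eigenvalues_nonneg_def by fastforce
  then have "0 \<le> lam * (u \<bullet> (diag_mat w *v u))"
    using inner_diag_mat_nonneg[of w u] w by (simp add: less_imp_le)
  then show ?thesis
    using le[of u] by linarith
qed

lemma eigenvalues_nonneg_iff_psd:
  fixes M :: "real^'n::finite^'n"
  assumes "\<And>x. w x > 0" and "transpose (diag_mat w ** M) = diag_mat w ** M"
  shows "eigenvalues_nonneg M \<longleftrightarrow> (\<forall>u. 0 \<le> u \<bullet> ((diag_mat w ** M) *v u))"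
  using assms psd_if_eigenvalues_nonneg is_eigenvalue_nonneg_if_psd
  unfolding eigenvalues_nonneg_def by blast

theorem theorem2:
  fixes P Q :: "real^'n::finite^'n" and \<pi> :: "'n \<Rightarrow> real"
  assumes "prob_dist \<pi>"
    and "transition_matrix P" and "transition_matrix Q"
    and "irreducible_tm P" and "irreducible_tm Q"
    and "reversible P \<pi>" and "reversible Q \<pi>"
  shows "(efficiency_dominates P Q \<pi> \<longleftrightarrow> eigenvalues_nonneg (Q - P))
       \<and> (eigenvalues_nonneg (Q - P) \<longleftrightarrow> eigenvalues_nonneg (diag_mat \<pi> ** (Q - P)))"
proof -
  define K where "K = diag_mat \<pi> ** (Q - P)"
  have chains: "irreducible_reversible_chain P \<pi>" "irreducible_reversible_chain Q \<pi>"
    using assms by (simp_all add: irreducible_reversible_chainI)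
  have pi_pos: "\<pi> x > 0" for x
    using assms(1) by (simp add: prob_dist_def)
  have sym: "transpose K = K"
    using assms(6,7) by (simp add: K_def reversible_def transpose_def vec_eq_iff diag_mat_mult_nth
        right_diff_distrib)
  have form: "u \<bullet> (K *v u) = wt_inner \<pi> u (Q *v u) - wt_inner \<pi> u (P *v u)" for u
    by (simp add: K_def wt_inner_eq_inner_diag_mat[symmetric] matrix_vector_mult_diff_rdistrib
        wt_inner_diff_right)
  have "efficiency_dominates P Q \<pi> \<longleftrightarrow> (\<forall>u. 0 \<le> u \<bullet> (K *v u))"
    unfolding efficiency_dominates_iff_wt_inner_le[OF chains] form by simp
  moreover have "eigenvalues_nonneg (Q - P) \<longleftrightarrow> (\<forall>u. 0 \<le> u \<bullet> (K *v u))"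
    using eigenvalues_nonneg_iff_psd[OF pi_pos] sym by (simp add: K_def)
  moreover have "eigenvalues_nonneg K \<longleftrightarrow> (\<forall>u. 0 \<le> u \<bullet> (K *v u))"
    using eigenvalues_nonneg_iff_psd[of "\<lambda>_. 1" K] sym by (simp add: diag_mat_1)
  ultimately show ?thesis
    by (simp add: K_def)
qed

end
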